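(* Let $\lambda>0$. For $\gamma>1$ let $B=B(\gamma)=\frac{\gamma-1}{2\gamma(\gamma+1)}$ and let $A=A(\gamma)>0$ be determined by \[2A^{\frac{\gamma+1}{2(\gamma-1)}}B^{-\frac12}\int_0^{\pi/2}(\cos\theta)^{\frac{\gamma+1}{\gamma-1}}d\theta=\lambda,\] and define $\mathcal{B}_\gamma(\xi)=\big[A-B\xi^2\big]_+^{\frac{1}{\gamma-1}}$ for $\xi\in\mathbb{R}$, where $[f]_+=\max\{f,0\}$ (so that the Barenblatt solution of $\partial_t\overline\rho_\gamma=\partial_x^2(\overline\rho_\gamma^{\,\gamma})$, $\overline\rho_\gamma(-1,\cdot)=\lambda\delta$, is $\overline\rho_\gamma(t,x)=(1+t)^{-\frac{1}{\gamma+1}}\mathcal{B}_\gamma\big(x(1+t)^{-\frac{1}{\gamma+1}}\big)$). Then \[\mathcal{B}_\gamma\longrightarrow\frac{\lambda}{2\sqrt{\pi}}e^{-\frac{\xi^2}{4}}\quad\text{in } L^\infty(\mathbb{R})\ \text{as }\gamma\to1.\] *)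

theory Defs
  imports "HOL-Analysis.Analysis"
begin

definition barenblatt_B :: "real \<Rightarrow> real" where
  "barenblatt_B \<gamma> = (\<gamma> - 1) / (2 * \<gamma> * (\<gamma> + 1))"

definition barenblatt_A_condition :: "real \<Rightarrow> real \<Rightarrow> real \<Rightarrow> bool" where
  "barenblatt_A_condition mass \<gamma> A \<longleftrightarrow>
     A > 0 \<and>
     2 * A powr ((\<gamma> + 1) / (2 * (\<gamma> - 1))) * barenblatt_B \<gamma> powr (-1/2)
       * integral {0..pi/2} (\<lambda>\<theta>. cos \<theta> powr ((\<gamma> + 1) / (\<gamma> - 1))) = mass"

definition barenblatt_profile :: "real \<Rightarrow> real \<Rightarrow> real \<Rightarrow> real" where
  "barenblatt_profile A \<gamma> \<xi> = (max (A - barenblatt_B \<gamma> * \<xi>\<^sup>2) 0) powr (1 / (\<gamma> - 1))"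

end

theory Submission
  imports Defs "HOL-Real_Asymp.Real_Asymp"
begin

text \<open>
  Put \<open>m = 1/(\<gamma> - 1)\<close> and \<open>p = (\<gamma> + 1)/(\<gamma> - 1)\<close>. The profile equals
  \<open>A^m * [1 - \<beta> \<xi>\<^sup>2 / m]\<^sub>+^m\<close> with \<open>\<beta> = 1/(2\<gamma>(\<gamma> + 1)A)\<close>, and \<open>[1 - s/m]\<^sub>+^m\<close> is within
  \<open>4/m\<close> of \<open>exp (-s)\<close> uniformly in \<open>s \<ge> 0\<close>. Writing \<open>I(p)\<close> for the integral of \<open>cos^p\<close>
  over \<open>[0, \<pi>/2]\<close>, the normalisation reads \<open>\<lambda> = A^(p/2) * sqrt (8\<gamma> p I(p)\<^sup>2)\<close>. The Wallis
  identity \<open>(n + 1) I(n) I(n + 1) = \<pi>/2\<close> and the monotonicity of \<open>I\<close> give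
  \<open>p I(p)\<^sup>2 \<rightarrow> \<pi>/2\<close> as \<open>p \<rightarrow> \<infinity>\<close>, so \<open>A^(p/2) \<rightarrow> \<lambda>/(2 sqrt \<pi>)\<close>. Hence \<open>A \<rightarrow> 1\<close>,
  \<open>\<beta> \<rightarrow> 1/4\<close> and \<open>A^m \<rightarrow> \<lambda>/(2 sqrt \<pi>)\<close>.
\<close>

section \<open>Wallis integrals\<close>

definition wallis_integral :: "nat \<Rightarrow> real" where
  "wallis_integral n = integral {0..pi/2} (\<lambda>t. cos t ^ n)"

lemma cos_power_integrable: "(\<lambda>t::real. cos t ^ n) integrable_on {a..b}"
  by (intro integrable_continuous_interval continuous_intros)

lemma wallis_integral_recurrence:
  "(real n + 2) * wallis_integral (n + 2) = (real n + 1) * wallis_integral n"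
proof -
  have pythagoras: "(real n + 1) * c ^ n * (- s) * s + c ^ (n + 1) * c
      = (real n + 2) * c ^ (n + 2) - (real n + 1) * c ^ n" if "s\<^sup>2 + c\<^sup>2 = 1" for c s :: real
  proof -
    have "(real n + 1) * c ^ n * (- s) * s + c ^ (n + 1) * c
        - ((real n + 2) * c ^ (n + 2) - (real n + 1) * c ^ n)
        = (real n + 1) * c ^ n * (1 - (s\<^sup>2 + c\<^sup>2))"
      by (simp add: power2_eq_square algebra_simps)
    with that show ?thesis
      by simp
  qed
  let ?f = "\<lambda>t. cos t ^ (n + 1) * sin t"
  let ?f' = "\<lambda>t. (real n + 2) * cos t ^ (n + 2) - (real n + 1) * cos t ^ n"
  have "(?f' has_integral (?f (pi/2) - ?f 0)) {0..pi/2}"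
  proof (rule fundamental_theorem_of_calculus)
    fix t :: real
    have "(?f has_real_derivative
            (real n + 1) * cos t ^ n * (- sin t) * sin t + cos t ^ (n + 1) * cos t) (at t)"
      by (rule derivative_eq_intros refl)+ simp
    then have "(?f has_real_derivative ?f' t) (at t)"
      using pythagoras[of "sin t" "cos t"] by simp
    then show "(?f has_vector_derivative ?f' t) (at t within {0..pi/2})"
      by (simp add: has_real_derivative_iff_has_vector_derivative has_vector_derivative_at_within)
  qed simp
  then have "integral {0..pi/2} ?f' = 0"
    by (simp add: integral_unique)
  moreover have "integral {0..pi/2} ?f' = (real n + 2) * wallis_integral (n + 2) - (real n + 1) * wallis_integral n"
    unfolding wallis_integral_def
    by (subst integral_diff) (auto intro!: integrable_continuous_interval continuous_intros)
  ultimately show ?thesis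
    by simp
qed

lemma wallis_integral_0: "wallis_integral 0 = pi/2"
  by (simp add: wallis_integral_def)

lemma wallis_integral_1: "wallis_integral 1 = 1"
proof -
  have "(cos has_integral (sin (pi/2) - sin 0)) {0..pi/2}"
    by (intro fundamental_theorem_of_calculus)
       (auto intro!: derivative_eq_intros simp flip: has_real_derivative_iff_has_vector_derivative)
  then show ?thesis
    unfolding wallis_integral_def by (simp add: integral_unique)
qed

lemma wallis_integral_product:
  "(real n + 1) * wallis_integral n * wallis_integral (n + 1) = pi/2"
proof (induction n)
  case 0
  then show ?case
    using wallis_integral_0 wallis_integral_1 by simp
next
  case (Suc n)
  have "(real (Suc n) + 1) * wallis_integral (Suc n) * wallis_integral (Suc n + 1)
      = wallis_integral (n + 1) * ((real n + 2) * wallis_integral (n + 2))"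
    by (simp add: algebra_simps)
  also have "\<dots> = wallis_integral (n + 1) * ((real n + 1) * wallis_integral n)"
    by (simp only: wallis_integral_recurrence)
  also have "\<dots> = pi/2"
    using Suc.IH by (simp only: ac_simps)
  finally show ?case .
qed

lemma wallis_integral_nonneg: "wallis_integral n \<ge> 0"
  unfolding wallis_integral_def
  by (intro integral_nonneg cos_power_integrable zero_le_power cos_ge_zero) auto

lemma wallis_integral_Suc_le: "wallis_integral (Suc n) \<le> wallis_integral n"
  unfolding wallis_integral_def
proof (rule integral_le[OF cos_power_integrable cos_power_integrable])
  fix t assume "t \<in> {0..pi/2}"
  then have "0 \<le> cos t"
    by (intro cos_ge_zero) auto
  then show "cos t ^ Suc n \<le> cos t ^ n"
    by (simp add: mult_left_le_one_le)
qed

lemma wallis_integral_sq_upper: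
  "(real n + 1) * wallis_integral n ^ 2 \<le> (real n + 2) / (real n + 1) * (pi/2)"
proof -
  have "(real n + 1) * wallis_integral n = (real n + 2) * wallis_integral (n + 2)"
    using wallis_integral_recurrence[of n] by simp
  also have "\<dots> \<le> (real n + 2) * wallis_integral (n + 1)"
    using wallis_integral_Suc_le[of "n + 1"] by simp
  finally have "(real n + 1) * wallis_integral n * ((real n + 1) * wallis_integral n)
      \<le> (real n + 2) * wallis_integral (n + 1) * ((real n + 1) * wallis_integral n)"
    by (intro mult_right_mono) (simp_all add: wallis_integral_nonneg)
  also have "\<dots> = (real n + 2) * (pi/2)"
    using wallis_integral_product[of n] by algebra
  finally show ?thesis
    by (simp add: field_simps power2_eq_square)
qed

lemma wallis_integral_Suc_sq_lower:
  "real n / (real n + 2) * (pi/2) \<le> real n * wallis_integral (n + 1) ^ 2"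
proof -
  have "real n / (real n + 2) * (pi/2) = real n * (wallis_integral (n + 1) * wallis_integral (n + 2))"
    using wallis_integral_product[of "n + 1"] by (simp add: field_simps)
  also have "\<dots> \<le> real n * wallis_integral (n + 1) ^ 2"
    using wallis_integral_Suc_le[of "n + 1"] wallis_integral_nonneg[of "n + 1"]
    by (intro mult_left_mono) (simp_all add: power2_eq_square mult_left_mono)
  finally show ?thesis .
qed

definition cos_powr_integral :: "real \<Rightarrow> real" where
  "cos_powr_integral p = integral {0..pi/2} (\<lambda>t. cos t powr p)"

lemma cos_powr_integrable: "p > 0 \<Longrightarrow> (\<lambda>t. cos t powr p) integrable_on {0..pi/2}"
  by (intro integrable_continuous_interval continuous_on_powr' continuous_intros)
     (auto intro!: cos_ge_zero)

lemma cos_powr_integral_of_nat: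
  assumes "n \<ge> 1"
  shows "cos_powr_integral (real n) = wallis_integral n"
  unfolding cos_powr_integral_def wallis_integral_def
proof (rule integral_cong)
  fix t assume "t \<in> {0..pi/2}"
  then have "cos t \<ge> 0"
    by (intro cos_ge_zero) auto
  then show "cos t powr real n = cos t ^ n"
    using assms by (cases "cos t = 0") (simp_all add: powr_realpow)
qed

lemma cos_powr_integral_antimono:
  assumes "0 < p" "p \<le> q"
  shows "cos_powr_integral q \<le> cos_powr_integral p"
  unfolding cos_powr_integral_def
proof (rule integral_le[OF cos_powr_integrable cos_powr_integrable])
  fix t assume "t \<in> {0..pi/2}"
  then have "0 \<le> cos t"
    by (intro cos_ge_zero) auto
  then show "cos t powr q \<le> cos t powr p"
    using assms by (cases "cos t = 0") (auto intro!: powr_mono')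
qed (use assms in auto)

lemma cos_powr_integral_nonneg: "p > 0 \<Longrightarrow> cos_powr_integral p \<ge> 0"
  unfolding cos_powr_integral_def by (auto intro!: integral_nonneg cos_powr_integrable)

lemma cos_powr_integral_sq_bounds:
  assumes "p \<ge> 1"
  shows "(p - 1) / (p + 1) * (pi/2) \<le> p * cos_powr_integral p ^ 2"
    and "p * cos_powr_integral p ^ 2 \<le> (p + 1) / p * (pi/2)"
proof -
  define n where "n = nat \<lfloor>p\<rfloor>"
  have n: "n \<ge> 1" "real n \<le> p" "p < real n + 1"
    using assms unfolding n_def by linarith+
  have "wallis_integral (n + 1) \<le> cos_powr_integral p"
    using cos_powr_integral_antimono[of p "real (n + 1)"] cos_powr_integral_of_nat[of "n + 1"] n assms
    by simp
  then have lower: "wallis_integral (n + 1) ^ 2 \<le> cos_powr_integral p ^ 2"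
    by (intro power_mono) (simp_all add: wallis_integral_nonneg)
  have "cos_powr_integral p \<le> wallis_integral n"
    using cos_powr_integral_antimono[of "real n" p] cos_powr_integral_of_nat[of n] n by simp
  then have upper: "cos_powr_integral p ^ 2 \<le> wallis_integral n ^ 2"
    using assms by (intro power_mono) (simp_all add: cos_powr_integral_nonneg)
  have "(p - 1) / (p + 1) * (pi/2) \<le> real n / (real n + 2) * (pi/2)"
    using n by (intro mult_right_mono) (simp_all add: field_simps)
  also have "\<dots> \<le> real n * wallis_integral (n + 1) ^ 2"
    by (rule wallis_integral_Suc_sq_lower)
  also have "\<dots> \<le> p * cos_powr_integral p ^ 2"
    using n lower by (intro mult_mono) simp_all
  finally show "(p - 1) / (p + 1) * (pi/2) \<le> p * cos_powr_integral p ^ 2" .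
  have "p * cos_powr_integral p ^ 2 \<le> (real n + 1) * wallis_integral n ^ 2"
    using n upper by (intro mult_mono) simp_all
  also have "\<dots> \<le> (real n + 2) / (real n + 1) * (pi/2)"
    by (rule wallis_integral_sq_upper)
  also have "\<dots> \<le> (p + 1) / p * (pi/2)"
    using n by (intro mult_right_mono) (simp_all add: field_simps)
  finally show "p * cos_powr_integral p ^ 2 \<le> (p + 1) / p * (pi/2)" .
qed

lemma tendsto_cos_powr_integral_sq: "((\<lambda>p. p * cos_powr_integral p ^ 2) \<longlongrightarrow> pi/2) at_top"
proof (rule tendsto_sandwich)
  show "\<forall>\<^sub>F p in at_top. (p - 1) / (p + 1) * (pi/2) \<le> p * cos_powr_integral p ^ 2"
    using eventually_ge_at_top[of 1] by eventually_elim (rule cos_powr_integral_sq_bounds)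
  show "\<forall>\<^sub>F p in at_top. p * cos_powr_integral p ^ 2 \<le> (p + 1) / p * (pi/2)"
    using eventually_ge_at_top[of 1] by eventually_elim (rule cos_powr_integral_sq_bounds)
qed real_asymp+

section \<open>Truncated powers and the Gaussian\<close>

lemma bernoulli_inequality_powr:
  fixes m y :: real
  assumes m: "m \<ge> 1" and y: "0 \<le> y" "y \<le> 1"
  shows "1 - m * y \<le> (1 - y) powr m"
proof (cases "y = 1")
  case True
  then show ?thesis
    using m by simp
next
  case False
  define f where "f z = (1 - z) powr m - 1 + m * z" for z :: real
  have "f 0 \<le> f y"
  proof (rule DERIV_nonneg_imp_nondecreasing[OF y(1)])
    fix z assume z: "0 \<le> z" "z \<le> y"
    with False y have "1 - z > 0"
      by simp
    then have "(f has_real_derivative m * (1 - z) powr (m - 1) * (-1) + m) (at z)"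
      unfolding f_def by (auto intro!: derivative_eq_intros)
    moreover have "(1 - z) powr (m - 1) \<le> 1"
      using \<open>1 - z > 0\<close> z m by (intro powr_le1) auto
    then have "m * (1 - z) powr (m - 1) * (-1) + m \<ge> 0"
      using m by (simp add: mult_left_le_one_le)
    ultimately show "\<exists>d. (f has_real_derivative d) (at z) \<and> 0 \<le> d"
      by blast
  qed
  then show ?thesis
    by (simp add: f_def)
qed

lemma mult_exp_neg_le_one: "t * exp (- t) \<le> (1::real)"
proof -
  have "t \<le> exp t"
    using exp_ge_add_one_self[of t] by linarith
  then show ?thesis
    by (simp add: exp_minus field_simps)
qed

lemma power2_mult_exp_neg_le:
  fixes s :: real
  assumes "s \<ge> 0"
  shows "s\<^sup>2 * exp (- s) \<le> 4"
proof -
  have "s\<^sup>2 * exp (- s) = 4 * (s/2 * exp (- (s/2)))\<^sup>2"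
    by (simp add: power2_eq_square field_simps flip: exp_add)
  also have "\<dots> \<le> 4"
    using assms mult_exp_neg_le_one[of "s/2"] by (simp add: power_le_one)
  finally show ?thesis .
qed

lemma one_minus_powr_le_exp:
  fixes m x :: real
  assumes "m \<ge> 0" "0 \<le> x" "x \<le> 1"
  shows "(1 - x) powr m \<le> exp (- (m * x))"
proof -
  have "(1 - x) powr m \<le> exp (- x) powr m"
    using exp_ge_add_one_self[of "- x"] assms by (intro powr_mono2) auto
  then show ?thesis
    by (simp add: powr_def)
qed

lemma exp_mult_le_one_minus_powr:
  fixes m x :: real
  assumes m: "m \<ge> 1" and x: "0 \<le> x" "x \<le> 1"
  shows "exp (- (m * x)) * (1 - m * x\<^sup>2) \<le> (1 - x) powr m"
proof -
  have "1 - x\<^sup>2 \<le> (1 - x) * exp x"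
    using exp_ge_add_one_self[of x] x mult_left_mono[of "1 + x" "exp x" "1 - x"]
    by (simp add: power2_eq_square algebra_simps)
  then have "(1 - x\<^sup>2) powr m \<le> ((1 - x) * exp x) powr m"
    using x m by (intro powr_mono2) (auto simp: power_le_one)
  moreover have "1 - m * x\<^sup>2 \<le> (1 - x\<^sup>2) powr m"
    using x m by (intro bernoulli_inequality_powr) (auto simp: power_le_one)
  moreover have "((1 - x) * exp x) powr m = (1 - x) powr m * exp (m * x)"
    using x by (simp add: powr_mult exp_powr_real mult.commute)
  ultimately have "1 - m * x\<^sup>2 \<le> (1 - x) powr m * exp (m * x)"
    by linarith
  then have "exp (- (m * x)) * (1 - m * x\<^sup>2) \<le> exp (- (m * x)) * ((1 - x) powr m * exp (m * x))"
    by (intro mult_left_mono) auto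
  then show ?thesis
    by (simp add: exp_minus field_simps)
qed

lemma abs_truncated_powr_minus_exp_le:
  fixes m s :: real
  assumes m: "m \<ge> 1" and s: "s \<ge> 0"
  shows "\<bar>max (1 - s / m) 0 powr m - exp (- s)\<bar> \<le> 4 / m"
proof (cases "s \<le> m")
  case False
  have "exp (- s) \<le> exp (- m)"
    using False by simp
  also have "\<dots> \<le> 4 / m"
    using mult_exp_neg_le_one[of m] m by (simp add: field_simps)
  finally have "exp (- s) \<le> 4 / m" .
  moreover have "max (1 - s / m) 0 = 0"
    using False m by (simp add: field_simps)
  ultimately show ?thesis
    by simp
next
  case True
  define x where "x = s / m"
  have x: "0 \<le> x" "x \<le> 1" "m * x = s" "max (1 - s / m) 0 = 1 - x"
    using True s m by (auto simp: x_def field_simps)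
  have "exp (- s) - (1 - x) powr m \<le> exp (- s) * (m * x\<^sup>2)"
    using exp_mult_le_one_minus_powr[OF m x(1,2)] x(3) by (simp add: algebra_simps)
  also have "\<dots> = s\<^sup>2 * exp (- s) / m"
    using m by (simp add: x_def power2_eq_square field_simps)
  also have "\<dots> \<le> 4 / m"
    using power2_mult_exp_neg_le[OF s] m by (simp add: divide_right_mono)
  finally show ?thesis
    using one_minus_powr_le_exp[of m x] x m by simp
qed

lemma abs_exp_neg_mult_diff_le:
  fixes a b t :: real
  assumes "0 < a" "0 < b" "0 \<le> t"
  shows "\<bar>exp (- (b * t)) - exp (- (a * t))\<bar> \<le> \<bar>b - a\<bar> / min a b"
proof -
  have ordered: "\<bar>exp (- (b * t)) - exp (- (a * t))\<bar> \<le> (b - a) / a" if "0 < a" "a \<le> b" for a b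
  proof -
    have "exp (- (a * t)) - exp (- (b * t)) = exp (- (a * t)) * (1 - exp (- ((b - a) * t)))"
      by (simp add: algebra_simps flip: exp_add)
    also have "\<dots> \<le> exp (- (a * t)) * ((b - a) * t)"
      using exp_ge_add_one_self[of "- ((b - a) * t)"] by (intro mult_left_mono) auto
    also have "\<dots> = (b - a) / a * (a * t * exp (- (a * t)))"
      using that by (simp add: field_simps)
    also have "\<dots> \<le> (b - a) / a"
      using that mult_exp_neg_le_one[of "a * t"] by (intro mult_left_le) auto
    finally show ?thesis
      using that \<open>0 \<le> t\<close> by (simp add: mult_right_mono)
  qed
  show ?thesis
    using ordered[of a b] ordered[of b a] assms
    by (cases "a \<le> b") (simp_all add: abs_minus_commute min_def)
qed

lemma abs_truncated_powr_minus_gaussian_le: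
  fixes a b c b\<^sub>0 m \<xi> :: real
  assumes "m \<ge> 1" "b > 0" "b\<^sub>0 > 0"
  shows "\<bar>a * max (1 - b * \<xi>\<^sup>2 / m) 0 powr m - c * exp (- (b\<^sub>0 * \<xi>\<^sup>2))\<bar>
    \<le> \<bar>a\<bar> * (4 / m) + \<bar>a\<bar> * (\<bar>b - b\<^sub>0\<bar> / min b\<^sub>0 b) + \<bar>a - c\<bar>"
proof -
  let ?T = "max (1 - b * \<xi>\<^sup>2 / m) 0 powr m"
  let ?E = "exp (- (b * \<xi>\<^sup>2))" and ?E\<^sub>0 = "exp (- (b\<^sub>0 * \<xi>\<^sup>2))"
  have "\<bar>a * ?T - c * ?E\<^sub>0\<bar> = \<bar>a * (?T - ?E) + a * (?E - ?E\<^sub>0) + (a - c) * ?E\<^sub>0\<bar>"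
    by (simp add: algebra_simps)
  also have "\<dots> \<le> \<bar>a * (?T - ?E)\<bar> + \<bar>a * (?E - ?E\<^sub>0)\<bar> + \<bar>(a - c) * ?E\<^sub>0\<bar>"
    by (rule order_trans[OF abs_triangle_ineq add_right_mono[OF abs_triangle_ineq]])
  also have "\<dots> = \<bar>a\<bar> * \<bar>?T - ?E\<bar> + \<bar>a\<bar> * \<bar>?E - ?E\<^sub>0\<bar> + \<bar>a - c\<bar> * ?E\<^sub>0"
    by (simp add: abs_mult)
  also have "\<dots> \<le> \<bar>a\<bar> * (4 / m) + \<bar>a\<bar> * (\<bar>b - b\<^sub>0\<bar> / min b\<^sub>0 b) + \<bar>a - c\<bar>"
    using assms
    by (intro add_mono mult_left_mono mult_left_le abs_truncated_powr_minus_exp_le abs_exp_neg_mult_diff_le) auto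
  finally show ?thesis .
qed

lemma uniform_limit_truncated_powr_gaussian:
  fixes a b m :: "'a \<Rightarrow> real"
  assumes a: "(a \<longlongrightarrow> c) F" and b: "(b \<longlongrightarrow> b\<^sub>0) F" "b\<^sub>0 > 0"
    and m: "filterlim m at_top F"
  shows "uniform_limit UNIV (\<lambda>x \<xi>. a x * max (1 - b x * \<xi>\<^sup>2 / m x) 0 powr m x)
           (\<lambda>\<xi>. c * exp (- (b\<^sub>0 * \<xi>\<^sup>2))) F"
proof (rule uniform_limitI)
  fix \<epsilon> :: real
  assume "\<epsilon> > 0"
  define D where "D x = \<bar>a x\<bar> * (4 / m x) + \<bar>a x\<bar> * (\<bar>b x - b\<^sub>0\<bar> / min b\<^sub>0 (b x)) + \<bar>a x - c\<bar>" for x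
  have "(D \<longlongrightarrow> \<bar>c\<bar> * 0 + \<bar>c\<bar> * (\<bar>b\<^sub>0 - b\<^sub>0\<bar> / min b\<^sub>0 b\<^sub>0) + \<bar>c - c\<bar>) F"
    unfolding D_def using b(2)
    by (intro tendsto_intros a b(1) tendsto_divide_0[OF tendsto_const]
        filterlim_at_top_imp_at_infinity[OF m]) auto
  then have "\<forall>\<^sub>F x in F. D x < \<epsilon>"
    using \<open>\<epsilon> > 0\<close> by (auto dest: order_tendstoD(2))
  moreover have "\<forall>\<^sub>F x in F. m x \<ge> 1"
    using m by (simp add: filterlim_at_top)
  moreover have "\<forall>\<^sub>F x in F. b x > 0"
    using b by (rule order_tendstoD(1))
  ultimately show "\<forall>\<^sub>F x in F. \<forall>\<xi>\<in>UNIV.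
      dist (a x * max (1 - b x * \<xi>\<^sup>2 / m x) 0 powr m x) (c * exp (- (b\<^sub>0 * \<xi>\<^sup>2))) < \<epsilon>"
  proof eventually_elim
    case (elim x)
    then show ?case
      using abs_truncated_powr_minus_gaussian_le[of "m x" "b x" b\<^sub>0] b(2)
      by (auto simp: dist_real_def D_def intro: le_less_trans)
  qed
qed

section \<open>Barenblatt profiles\<close>

lemma barenblatt_profile_eq_truncated_powr:
  assumes "\<gamma> > 1" "A > 0"
  defines "m \<equiv> 1 / (\<gamma> - 1)"
  shows "barenblatt_profile A \<gamma> \<xi>
    = A powr m * max (1 - 1 / (2 * \<gamma> * (\<gamma> + 1) * A) * \<xi>\<^sup>2 / m) 0 powr m"
proof -
  have "1 / (2 * \<gamma> * (\<gamma> + 1) * A) * \<xi>\<^sup>2 / m = barenblatt_B \<gamma> * \<xi>\<^sup>2 / A"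
    by (simp add: m_def barenblatt_B_def)
  then have "A - barenblatt_B \<gamma> * \<xi>\<^sup>2 = A * (1 - 1 / (2 * \<gamma> * (\<gamma> + 1) * A) * \<xi>\<^sup>2 / m)"
    using assms(2) by (simp add: field_simps)
  then have "max (A - barenblatt_B \<gamma> * \<xi>\<^sup>2) 0 = A * max (1 - 1 / (2 * \<gamma> * (\<gamma> + 1) * A) * \<xi>\<^sup>2 / m) 0"
    using assms by (simp add: max_mult_distrib_left)
  then show ?thesis
    using assms by (simp add: barenblatt_profile_def powr_mult)
qed

lemma barenblatt_A_condition_imp_eq:
  assumes "\<gamma> > 1" "barenblatt_A_condition mass \<gamma> A"
  defines "p \<equiv> (\<gamma> + 1) / (\<gamma> - 1)"
  shows "sqrt (8 * \<gamma> * (p * cos_powr_integral p ^ 2)) * A powr (p / 2) = mass"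
proof -
  have B: "barenblatt_B \<gamma> > 0" "8 * \<gamma> * p * barenblatt_B \<gamma> = 4"
    using assms(1) by (simp_all add: p_def barenblatt_B_def)
  have "sqrt (8 * \<gamma> * p) * sqrt (barenblatt_B \<gamma>) = 2"
    by (metis B(2) real_sqrt_mult real_sqrt_four)
  then have sqrt_8\<gamma>p: "sqrt (8 * \<gamma> * p) = 2 * barenblatt_B \<gamma> powr (- 1/2)"
    using B(1) by (simp add: powr_minus_divide powr_half_sqrt field_simps)
  have "cos_powr_integral p \<ge> 0"
    using assms(1) by (intro cos_powr_integral_nonneg) (simp add: p_def)
  then have "sqrt (8 * \<gamma> * (p * cos_powr_integral p ^ 2)) = sqrt (8 * \<gamma> * p) * cos_powr_integral p"
    by (metis mult.assoc real_sqrt_mult real_sqrt_abs abs_of_nonneg)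
  also have "\<dots> = 2 * barenblatt_B \<gamma> powr (- 1/2) * cos_powr_integral p"
    by (simp add: sqrt_8\<gamma>p)
  finally have "sqrt (8 * \<gamma> * (p * cos_powr_integral p ^ 2))
      = 2 * barenblatt_B \<gamma> powr (- 1/2) * cos_powr_integral p" .
  moreover have "(\<gamma> + 1) / (2 * (\<gamma> - 1)) = p / 2"
    by (simp add: p_def)
  ultimately show ?thesis
    using assms(2) by (simp add: barenblatt_A_condition_def cos_powr_integral_def p_def ac_simps)
qed

lemma barenblatt_A_limits:
  fixes A :: "real \<Rightarrow> real"
  assumes mass: "mass > 0"
    and A: "\<And>\<gamma>. \<gamma> > 1 \<Longrightarrow> barenblatt_A_condition mass \<gamma> (A \<gamma>)"
  shows "(A \<longlongrightarrow> 1) (at_right 1)"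
    and "((\<lambda>\<gamma>. A \<gamma> powr (1 / (\<gamma> - 1))) \<longlongrightarrow> mass / (2 * sqrt pi)) (at_right 1)"
proof -
  define p where "p \<gamma> = (\<gamma> + 1) / (\<gamma> - 1)" for \<gamma> :: real
  define C where "C \<gamma> = A \<gamma> powr (p \<gamma> / 2)" for \<gamma>
  define K where "K \<gamma> = 8 * \<gamma> * (p \<gamma> * cos_powr_integral (p \<gamma>) ^ 2)" for \<gamma>
  have "filterlim p at_top (at_right 1)"
    unfolding p_def by real_asymp
  then have "((\<lambda>\<gamma>. p \<gamma> * cos_powr_integral (p \<gamma>) ^ 2) \<longlongrightarrow> pi/2) (at_right 1)"
    by (rule filterlim_compose[OF tendsto_cos_powr_integral_sq])
  then have "((\<lambda>\<gamma>. mass / sqrt (K \<gamma>)) \<longlongrightarrow> mass / sqrt (8 * 1 * (pi/2))) (at_right 1)"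
    unfolding K_def by (intro tendsto_intros) simp_all
  moreover have "\<forall>\<^sub>F \<gamma> in at_right 1. C \<gamma> = mass / sqrt (K \<gamma>)"
    using eventually_at_right_less
  proof eventually_elim
    case (elim \<gamma>)
    have "sqrt (K \<gamma>) * C \<gamma> = mass"
      unfolding C_def K_def p_def by (rule barenblatt_A_condition_imp_eq[OF elim A[OF elim]])
    then show ?case
      using mass by (auto simp: field_simps)
  qed
  ultimately have C: "(C \<longlongrightarrow> mass / (2 * sqrt pi)) (at_right 1)"
    by (simp add: tendsto_cong real_sqrt_mult)
  have A_eq: "A \<gamma> = C \<gamma> powr (2 * (\<gamma> - 1) / (\<gamma> + 1))"
    and A_powr_eq: "A \<gamma> powr (1 / (\<gamma> - 1)) = C \<gamma> powr (2 / (\<gamma> + 1))" if "\<gamma> > 1" for \<gamma>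
  proof -
    have "A \<gamma> > 0"
      using A[OF that] by (simp add: barenblatt_A_condition_def)
    moreover have "p \<gamma> / 2 * (2 * (\<gamma> - 1) / (\<gamma> + 1)) = 1"
      using that by (simp add: p_def)
    ultimately show "A \<gamma> = C \<gamma> powr (2 * (\<gamma> - 1) / (\<gamma> + 1))"
      by (simp only: C_def powr_powr) simp
    have "p \<gamma> / 2 * (2 / (\<gamma> + 1)) = 1 / (\<gamma> - 1)"
      using that by (simp add: p_def divide_simps; simp add: algebra_simps)
    then show "A \<gamma> powr (1 / (\<gamma> - 1)) = C \<gamma> powr (2 / (\<gamma> + 1))"
      by (simp only: C_def powr_powr)
  qed
  have "((\<lambda>\<gamma>. C \<gamma> powr (2 * (\<gamma> - 1) / (\<gamma> + 1))) \<longlongrightarrow> 1) (at_right 1)"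
    using mass by (auto intro!: tendsto_eq_intros C)
  then show "(A \<longlongrightarrow> 1) (at_right 1)"
    by (rule Lim_transform_eventually[OF _ eventually_mono[OF eventually_at_right_less A_eq[symmetric]]])
  have "((\<lambda>\<gamma>. C \<gamma> powr (2 / (\<gamma> + 1))) \<longlongrightarrow> mass / (2 * sqrt pi)) (at_right 1)"
    using mass by (auto intro!: tendsto_eq_intros C)
  then show "((\<lambda>\<gamma>. A \<gamma> powr (1 / (\<gamma> - 1))) \<longlongrightarrow> mass / (2 * sqrt pi)) (at_right 1)"
    by (rule Lim_transform_eventually[OF _ eventually_mono[OF eventually_at_right_less A_powr_eq[symmetric]]])
qed

theorem proposition3:
  fixes mass :: real and A :: "real \<Rightarrow> real"
  assumes "mass > 0"
    and "\<And>\<gamma>. \<gamma> > 1 \<Longrightarrow> barenblatt_A_condition mass \<gamma> (A \<gamma>)"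
  shows "uniform_limit UNIV (\<lambda>\<gamma> \<xi>. barenblatt_profile (A \<gamma>) \<gamma> \<xi>)
           (\<lambda>\<xi>. mass / (2 * sqrt pi) * exp (- (\<xi>\<^sup>2) / 4)) (at_right 1)"
proof -
  note A_limits = barenblatt_A_limits[OF assms]
  have "((\<lambda>\<gamma>. 1 / (2 * \<gamma> * (\<gamma> + 1) * A \<gamma>)) \<longlongrightarrow> 1/4) (at_right 1)"
    by (auto intro!: tendsto_eq_intros A_limits(1))
  moreover have "filterlim (\<lambda>\<gamma>. 1 / (\<gamma> - 1)) at_top (at_right (1::real))"
    by real_asymp
  ultimately have "uniform_limit UNIV
      (\<lambda>\<gamma> \<xi>. A \<gamma> powr (1 / (\<gamma> - 1))
         * max (1 - 1 / (2 * \<gamma> * (\<gamma> + 1) * A \<gamma>) * \<xi>\<^sup>2 / (1 / (\<gamma> - 1))) 0 powr (1 / (\<gamma> - 1)))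
      (\<lambda>\<xi>. mass / (2 * sqrt pi) * exp (- (1/4 * \<xi>\<^sup>2))) (at_right 1)"
    by (intro uniform_limit_truncated_powr_gaussian A_limits(2)) simp_all
  moreover have "\<forall>\<^sub>F \<gamma> in at_right 1. \<forall>\<xi>\<in>UNIV. barenblatt_profile (A \<gamma>) \<gamma> \<xi>
      = A \<gamma> powr (1 / (\<gamma> - 1))
         * max (1 - 1 / (2 * \<gamma> * (\<gamma> + 1) * A \<gamma>) * \<xi>\<^sup>2 / (1 / (\<gamma> - 1))) 0 powr (1 / (\<gamma> - 1))"
    using eventually_at_right_less
  proof eventually_elim
    case (elim \<gamma>)
    then have "A \<gamma> > 0"
      using assms(2) by (simp add: barenblatt_A_condition_def)
    then show ?case
      using barenblatt_profile_eq_truncated_powr[OF elim] by blast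
  qed
  ultimately show ?thesis
    by (simp add: uniform_limit_cong)
qed

end
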